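(* For $n\ge 2$ and $1\le m\le n$, $$s_u(n,m)\le\frac{(n-1)!}{(m-1)!}\big(H(n-1)\big)^{m-1},$$ where $s_u(n,m)$ are the unsigned Stirling numbers of the first kind and $H(N)=\sum_{i=1}^N\frac1i$. *)

theory Defs
  imports "HOL-Analysis.Analysis" "HOL-Combinatorics.Stirling"
begin

end

theory Submission
  imports Defs
begin

text \<open>Induction on \<open>n\<close> along the recurrence
  \<open>s(p+2, j+2) = (p+1) s(p+1, j+2) + s(p+1, j+1)\<close>.  Inserting the inductive bounds, the
  right-hand side becomes \<open>(p+1)!/(j+1)!\<close> times \<open>H^(j+1) + (j+1) H^j/(p+1)\<close> with
  \<open>H = H(p)\<close>, and these are the first two terms of the binomial expansion of
  \<open>H(p+1)^(j+1) = (H + 1/(p+1))^(j+1)\<close>.\<close>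

lemma power_add_ge_first_order:
  fixes a d :: "'a :: linordered_semidom"
  assumes "a \<ge> 0" "d \<ge> 0"
  shows "a ^ Suc j + of_nat (Suc j) * a ^ j * d \<le> (a + d) ^ Suc j"
proof (induction j)
  case 0
  then show ?case by simp
next
  case (Suc j)
  have "a ^ Suc (Suc j) + of_nat (Suc (Suc j)) * a ^ Suc j * d
      \<le> a ^ Suc (Suc j) + of_nat (Suc (Suc j)) * a ^ Suc j * d + of_nat (Suc j) * a ^ j * d * d"
    using assms by simp
  also have "\<dots> = (a + d) * (a ^ Suc j + of_nat (Suc j) * a ^ j * d)"
    by (simp add: algebra_simps)
  also have "\<dots> \<le> (a + d) * (a + d) ^ Suc j"
    using Suc assms by (intro mult_left_mono) auto
  finally show ?case by simp
qed

lemma stirling_Suc_Suc_le_fact_harm_power: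
  "real (stirling (Suc p) (Suc k)) \<le> fact p / fact k * harm p ^ k"
proof (induction p arbitrary: k)
  case 0
  then show ?case by (cases k) (auto simp: harm_altdef)
next
  case (Suc p)
  show ?case
  proof (cases k)
    case 0
    with stirling_Suc_n_1[of "Suc p"] show ?thesis by (simp del: stirling.simps add: algebra_simps)
  next
    case (Suc j)
    define H :: real where "H = harm p"
    have "real (stirling (Suc (Suc p)) (Suc k)) =
        real (Suc p) * stirling (Suc p) (Suc (Suc j)) + stirling (Suc p) (Suc j)"
      by (simp only: Suc stirling.simps(4) of_nat_add of_nat_mult)
    also have "\<dots> \<le> real (Suc p) * (fact p / fact (Suc j) * H ^ Suc j) + fact p / fact j * H ^ j"
      using Suc.IH[of "Suc j"] Suc.IH[of j] unfolding H_def
      by (intro add_mono mult_left_mono) auto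
    also have "\<dots> = fact (Suc p) / fact (Suc j) *
        (H ^ Suc j + of_nat (Suc j) * H ^ j * (1 / real (Suc p)))"
      by (simp add: field_simps del: of_nat_Suc)
    also have "\<dots> \<le> fact (Suc p) / fact (Suc j) * (H + 1 / real (Suc p)) ^ Suc j"
      unfolding H_def
      by (intro mult_left_mono power_add_ge_first_order harm_nonneg) auto
    also have "\<dots> = fact (Suc p) / fact k * harm (Suc p) ^ k"
      using Suc by (simp add: H_def harm_Suc divide_inverse)
    finally show ?thesis .
  qed
qed

theorem lemma5p1:
  fixes n m :: nat
  assumes "n \<ge> 2" and "1 \<le> m" and "m \<le> n"
  shows "real (stirling n m) \<le>
           fact (n - 1) / fact (m - 1) * (harm (n - 1) :: real) ^ (m - 1)"
proof -
  obtain p k where "n = Suc p" "m = Suc k"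
    using assms by (metis Suc_le_D not0_implies_Suc not_one_le_zero)
  then show ?thesis using stirling_Suc_Suc_le_fact_harm_power[of p k] by simp
qed

end
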